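(* Let $S=\{1,\dots,n\}$ (servers) and $C=\{1,\dots,m\}$ (contents), let $U_s>0$ and integers $d_s\ge 1$ be given for $s\in S$, and let $\lambda_c\ge 0$ be given for $c\in C$. Let $\mathcal{A}$ be the set of binary matrices $A=(a_{sc})\in\{0,1\}^{S\times C}$ with $\sum_{c\in C}a_{sc}\le d_s$ for all $s\in S$. For $A\in\mathcal{A}$, let $\mathcal{B}(A,\Lambda)$ be the set of matrices $B=(b_{sc})_{s\in S,c\in C}$ with nonnegative real entries satisfying $\sum_{c\in C}b_{sc}\le U_s$ for all $s\in S$, $\sum_{s\in S}b_{sc}\le \lambda_c$ for all $c\in C$, and $\mathbb{1}(b_{sc}>0)\le a_{sc}$ for all $(s,c)$. Consider \[ \text{(P1)}\qquad \max_{A\in\mathcal{A}}\ \max_{B\in\mathcal{B}(A,\Lambda)}\ \sum_{s\in S}\sum_{c\in C} b_{sc}, \] and \[ \text{(P2)}\qquad \max_{Z=(z_{sc})}\ \sum_{s\in S}\sum_{c\in C} z_{sc}\quad\text{s.t. } \sum_{c\in C}z_{sc}\le U_s\ \forall s,\ \ \sum_{s\in S}z_{sc}\le\lambda_c\ \forall c,\ \ \sum_{c\in C}\mathbb{1}(z_{sc}>0)\le d_s\ \forall s,\ \ z_{sc}\in\mathbb{R}_+ . \] Then problems (P1) and (P2) are equivalent (in particular, they have the same optimal value). Furthermore, if $Z^*=(z^*_{sc})$ is an optimal solution of (P2), then the matrix $A^*$ defined by $a^*_{sc}=\mathbb{1}(z^*_{sc}>0)$ for all $(s,c)\in S\times C$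 is an optimal solution (optimal allocation) of (P1).
   Context: $\mathbb{1}(\cdot)$ denotes the indicator function. $\Lambda=(\lambda_c)_{c\in C}$ is the vector of content popularities (arrival rates). $a_{sc}=1$ means content $c$ is stored in the cache of server $s$; $b_{sc}$ is the amount of requests of content $c$ matched to server $s$. *)

theory Defs
  imports Complex_Main
begin

text \<open>Servers S = {1..n}, contents C = {1..m}. Matrices are functions
  nat \<Rightarrow> nat \<Rightarrow> _ ; only the entries with (s,c) in S x C matter.\<close>

definition total :: "nat \<Rightarrow> nat \<Rightarrow> (nat \<Rightarrow> nat \<Rightarrow> real) \<Rightarrow> real" where
  "total n m b = (\<Sum>s\<in>{1..n}. \<Sum>c\<in>{1..m}. b s c)"

definition alloc :: "nat \<Rightarrow> nat \<Rightarrow> (nat \<Rightarrow> nat) \<Rightarrow> (nat \<Rightarrow> nat \<Rightarrow> nat) set" where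
  "alloc n m d = {a. (\<forall>s\<in>{1..n}. \<forall>c\<in>{1..m}. a s c \<in> {0,1}) \<and>
                     (\<forall>s\<in>{1..n}. (\<Sum>c\<in>{1..m}. a s c) \<le> d s)}"

definition matchings :: "nat \<Rightarrow> nat \<Rightarrow> (nat \<Rightarrow> real) \<Rightarrow> (nat \<Rightarrow> real) \<Rightarrow>
    (nat \<Rightarrow> nat \<Rightarrow> nat) \<Rightarrow> (nat \<Rightarrow> nat \<Rightarrow> real) set" where
  "matchings n m U lam a = {b.
     (\<forall>s\<in>{1..n}. \<forall>c\<in>{1..m}. b s c \<ge> 0) \<and>
     (\<forall>s\<in>{1..n}. (\<Sum>c\<in>{1..m}. b s c) \<le> U s) \<and>
     (\<forall>c\<in>{1..m}. (\<Sum>s\<in>{1..n}. b s c) \<le> lam c) \<and>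
     (\<forall>s\<in>{1..n}. \<forall>c\<in>{1..m}. (of_bool (b s c > 0) :: nat) \<le> a s c)}"

definition P2_feasible :: "nat \<Rightarrow> nat \<Rightarrow> (nat \<Rightarrow> real) \<Rightarrow> (nat \<Rightarrow> nat) \<Rightarrow> (nat \<Rightarrow> real) \<Rightarrow>
    (nat \<Rightarrow> nat \<Rightarrow> real) set" where
  "P2_feasible n m U d lam = {z.
     (\<forall>s\<in>{1..n}. \<forall>c\<in>{1..m}. z s c \<ge> 0) \<and>
     (\<forall>s\<in>{1..n}. (\<Sum>c\<in>{1..m}. z s c) \<le> U s) \<and>
     (\<forall>c\<in>{1..m}. (\<Sum>s\<in>{1..n}. z s c) \<le> lam c) \<and>
     (\<forall>s\<in>{1..n}. (\<Sum>c\<in>{1..m}. (of_bool (z s c > 0) :: nat)) \<le> d s)}"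

definition P1_opt_value :: "nat \<Rightarrow> nat \<Rightarrow> (nat \<Rightarrow> real) \<Rightarrow> (nat \<Rightarrow> nat) \<Rightarrow> (nat \<Rightarrow> real) \<Rightarrow> real \<Rightarrow> bool" where
  "P1_opt_value n m U d lam v \<longleftrightarrow>
     (\<exists>a\<in>alloc n m d. \<exists>b\<in>matchings n m U lam a. total n m b = v) \<and>
     (\<forall>a\<in>alloc n m d. \<forall>b\<in>matchings n m U lam a. total n m b \<le> v)"

definition P2_opt_value :: "nat \<Rightarrow> nat \<Rightarrow> (nat \<Rightarrow> real) \<Rightarrow> (nat \<Rightarrow> nat) \<Rightarrow> (nat \<Rightarrow> real) \<Rightarrow> real \<Rightarrow> bool" where
  "P2_opt_value n m U d lam v \<longleftrightarrow>
     (\<exists>z\<in>P2_feasible n m U d lam. total n m z = v) \<and>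
     (\<forall>z\<in>P2_feasible n m U d lam. total n m z \<le> v)"

definition P2_optimal :: "nat \<Rightarrow> nat \<Rightarrow> (nat \<Rightarrow> real) \<Rightarrow> (nat \<Rightarrow> nat) \<Rightarrow> (nat \<Rightarrow> real) \<Rightarrow>
    (nat \<Rightarrow> nat \<Rightarrow> real) \<Rightarrow> bool" where
  "P2_optimal n m U d lam z \<longleftrightarrow> z \<in> P2_feasible n m U d lam \<and>
     (\<forall>z'\<in>P2_feasible n m U d lam. total n m z' \<le> total n m z)"

definition P1_optimal_alloc :: "nat \<Rightarrow> nat \<Rightarrow> (nat \<Rightarrow> real) \<Rightarrow> (nat \<Rightarrow> nat) \<Rightarrow> (nat \<Rightarrow> real) \<Rightarrow>
    (nat \<Rightarrow> nat \<Rightarrow> nat) \<Rightarrow> bool" where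
  "P1_optimal_alloc n m U d lam a \<longleftrightarrow> a \<in> alloc n m d \<and>
     (\<exists>b\<in>matchings n m U lam a. \<forall>a'\<in>alloc n m d. \<forall>b'\<in>matchings n m U lam a'.
         total n m b' \<le> total n m b)"

end

theory Submission
  imports Defs "HOL-Analysis.Analysis"
begin

text \<open>A feasible matching for an allocation A is feasible for (P2), since its support lies
  under A; conversely every (P2)-feasible Z is a feasible matching for the allocation given by
  its own support. Hence (P1) and (P2) have the same feasible objective values, and it remains
  to see that (P2) attains its maximum. Its feasible set is closed: the sparsity constraint says
  that in every set of more than d_s contents some entry of row s is non-positive, a finite
  intersection of finite unions of closed half-spaces. Restricting to the entries in S \<times> C
  changes neither feasibility nor the objective and lands in a compact box.\<close>

definition support_alloc :: "(nat \<Rightarrow> nat \<Rightarrow> real) \<Rightarrow> nat \<Rightarrow> nat \<Rightarrow> nat" where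
  "support_alloc z = (\<lambda>s c. if z s c > 0 then 1 else 0)"

lemma matching_in_P2_feasible:
  assumes "a \<in> alloc n m d" "b \<in> matchings n m U lam a"
  shows "b \<in> P2_feasible n m U d lam"
proof -
  have "(\<Sum>c\<in>{1..m}. (of_bool (b s c > 0) :: nat)) \<le> d s" if s: "s \<in> {1..n}" for s
  proof -
    have "(\<Sum>c\<in>{1..m}. (of_bool (b s c > 0) :: nat)) \<le> (\<Sum>c\<in>{1..m}. a s c)"
      using assms(2) s by (intro sum_mono) (auto simp: matchings_def)
    also have "\<dots> \<le> d s" using assms(1) s by (auto simp: alloc_def)
    finally show ?thesis .
  qed
  then show ?thesis using assms(2) by (auto simp: matchings_def P2_feasible_def)
qed

lemma support_alloc_in_alloc:
  assumes "z \<in> P2_feasible n m U d lam"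
  shows "support_alloc z \<in> alloc n m d"
  using assms by (auto simp: P2_feasible_def alloc_def support_alloc_def of_bool_def)

lemma P2_feasible_in_matchings_support_alloc:
  assumes "z \<in> P2_feasible n m U d lam"
  shows "z \<in> matchings n m U lam (support_alloc z)"
  using assms by (auto simp: P2_feasible_def matchings_def support_alloc_def)

lemma P1_opt_value_iff_P2_opt_value:
  "P1_opt_value n m U d lam v \<longleftrightarrow> P2_opt_value n m U d lam v"
  unfolding P1_opt_value_def P2_opt_value_def
  by (meson matching_in_P2_feasible support_alloc_in_alloc P2_feasible_in_matchings_support_alloc)

lemma P2_optimal_imp_P1_optimal_alloc:
  assumes "P2_optimal n m U d lam z"
  shows "P1_optimal_alloc n m U d lam (support_alloc z)"
  using assms unfolding P2_optimal_def P1_optimal_alloc_def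
  by (meson matching_in_P2_feasible support_alloc_in_alloc P2_feasible_in_matchings_support_alloc)

lemma card_filter_le_iff:
  assumes "finite A"
  shows "card {x\<in>A. P x} \<le> k \<longleftrightarrow> (\<forall>B\<subseteq>A. k < card B \<longrightarrow> (\<exists>x\<in>B. \<not> P x))"
proof
  assume le: "card {x\<in>A. P x} \<le> k"
  show "\<forall>B\<subseteq>A. k < card B \<longrightarrow> (\<exists>x\<in>B. \<not> P x)"
  proof (intro allI impI)
    fix B assume "B \<subseteq> A" "k < card B"
    show "\<exists>x\<in>B. \<not> P x"
    proof (rule ccontr)
      assume "\<not> (\<exists>x\<in>B. \<not> P x)"
      then have "B \<subseteq> {x\<in>A. P x}" using \<open>B \<subseteq> A\<close> by blast
      then have "card B \<le> card {x\<in>A. P x}" using assms by (intro card_mono) auto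
      with le \<open>k < card B\<close> show False by linarith
    qed
  qed
next
  assume "\<forall>B\<subseteq>A. k < card B \<longrightarrow> (\<exists>x\<in>B. \<not> P x)"
  then show "card {x\<in>A. P x} \<le> k"
    by (metis (mono_tags, lifting) mem_Collect_eq not_le_imp_less subsetI)
qed

lemma continuous_on_entry:
  "continuous_on S (\<lambda>z :: 'a \<Rightarrow> 'b \<Rightarrow> real. z s c)"
  using continuous_on_product_then_coordinatewise[OF continuous_on_product_coordinates]
  by (rule continuous_on_subset) simp

lemma closed_card_positive_entries_le:
  assumes "finite A"
  shows "closed {z :: 'a \<Rightarrow> 'b \<Rightarrow> real. card {c\<in>A. z s c > 0} \<le> k}"
proof -
  have "{z :: 'a \<Rightarrow> 'b \<Rightarrow> real. card {c\<in>A. z s c > 0} \<le> k} =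
      (\<Inter>B\<in>{B. B \<subseteq> A \<and> k < card B}. \<Union>c\<in>B. {z. z s c \<le> 0})"
    using card_filter_le_iff[OF assms] by (auto simp: not_less)
  moreover have "closed (\<Union>c\<in>B. {z :: 'a \<Rightarrow> 'b \<Rightarrow> real. z s c \<le> 0})" if "B \<subseteq> A" for B
    using that assms finite_subset
    by (intro closed_UN) (auto intro: closed_Collect_le continuous_on_entry)
  ultimately show ?thesis by (simp add: closed_INT)
qed

lemma closed_P2_feasible: "closed (P2_feasible n m U d lam)"
proof -
  have "P2_feasible n m U d lam =
      (\<Inter>s\<in>{1..n}. \<Inter>c\<in>{1..m}. {z. 0 \<le> z s c}) \<inter>
      (\<Inter>s\<in>{1..n}. {z. (\<Sum>c\<in>{1..m}. z s c) \<le> U s}) \<inter>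
      (\<Inter>c\<in>{1..m}. {z. (\<Sum>s\<in>{1..n}. z s c) \<le> lam c}) \<inter>
      (\<Inter>s\<in>{1..n}. {z. card {c\<in>{1..m}. z s c > 0} \<le> d s})"
    by (auto simp: P2_feasible_def Int_def conj_commute)
  moreover have "closed {z :: nat \<Rightarrow> nat \<Rightarrow> real. card {c\<in>{1..m}. z s c > 0} \<le> d s}" for s
    by (rule closed_card_positive_entries_le) simp
  ultimately show ?thesis
    by (simp add: closed_Int closed_INT closed_Collect_le continuous_on_entry continuous_on_sum)
qed

lemma compact_PiE_UNIV:
  assumes "\<And>i. compact (S i)"
  shows "compact (PiE UNIV S :: ('a \<Rightarrow> 'b::topological_space) set)"
proof -
  have "compactin (product_topology (\<lambda>i. euclidean) UNIV) (PiE UNIV S)"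
    using assms by (subst compactin_PiE) auto
  then show ?thesis by (simp add: euclidean_product_topology)
qed

lemma P2_feasible_cong:
  assumes "\<And>s c. s \<in> {1..n} \<Longrightarrow> c \<in> {1..m} \<Longrightarrow> z s c = z' s c"
  shows "z \<in> P2_feasible n m U d lam \<longleftrightarrow> z' \<in> P2_feasible n m U d lam"
proof -
  have "{1..m} \<inter> {c. 0 < z s c} = {1..m} \<inter> {c. 0 < z' s c}" if "s \<in> {1..n}" for s
    using assms that by auto
  then show ?thesis using assms by (simp add: P2_feasible_def)
qed

lemma P2_optimal_exists:
  assumes "\<forall>s\<in>{1..n}. U s \<ge> 0" and "\<forall>c\<in>{1..m}. lam c \<ge> 0"
  shows "\<exists>z. P2_optimal n m U d lam z"
proof -
  define inside where "inside s c \<longleftrightarrow> s \<in> {1..n} \<and> c \<in> {1..m}" for s c :: nat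
  define restrict where "restrict z = (\<lambda>s c. if inside s c then z s c else 0)"
    for z :: "nat \<Rightarrow> nat \<Rightarrow> real"
  define box :: "(nat \<Rightarrow> nat \<Rightarrow> real) set" where
    "box = PiE UNIV (\<lambda>s. PiE UNIV (\<lambda>c. if inside s c then {0..U s} else {0}))"
  define F where "F = P2_feasible n m U d lam \<inter> box"
  have restrict_feasible: "restrict z \<in> F" "total n m (restrict z) = total n m z"
    if z: "z \<in> P2_feasible n m U d lam" for z
  proof -
    have entry_le: "z s c \<le> U s" if "inside s c" for s c
    proof -
      have "z s c \<le> (\<Sum>c\<in>{1..m}. z s c)"
        using z that by (intro member_le_sum) (auto simp: P2_feasible_def inside_def)
      then show ?thesis using z that by (force simp: P2_feasible_def inside_def)
    qed
    have agree: "restrict z s c = z s c" if "s \<in> {1..n}" "c \<in> {1..m}" for s c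
      using that by (simp add: restrict_def inside_def)
    have "restrict z \<in> box"
      using z entry_le by (auto simp: box_def PiE_iff P2_feasible_def restrict_def inside_def)
    then show "restrict z \<in> F"
      using z P2_feasible_cong[OF agree] by (simp add: F_def)
    show "total n m (restrict z) = total n m z"
      using agree by (simp add: total_def)
  qed
  have "compact F"
    unfolding F_def box_def using closed_P2_feasible
    by (intro closed_Int_compact compact_PiE_UNIV) auto
  moreover have "F \<noteq> {}"
    using restrict_feasible(1)[of "\<lambda>s c. 0"] assms by (auto simp: P2_feasible_def)
  moreover have "continuous_on F (total n m)"
    unfolding total_def by (intro continuous_on_sum continuous_on_entry)
  ultimately obtain z where z: "z \<in> F" "\<forall>y\<in>F. total n m y \<le> total n m z"
    using continuous_attains_sup by blast
  then have "P2_optimal n m U d lam z"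
    unfolding P2_optimal_def using restrict_feasible by (metis F_def IntD1)
  then show ?thesis by blast
qed

theorem proposition1:
  fixes n m :: nat and U :: "nat \<Rightarrow> real" and d :: "nat \<Rightarrow> nat" and lam :: "nat \<Rightarrow> real"
  assumes "\<forall>s\<in>{1..n}. U s > 0"
    and "\<forall>s\<in>{1..n}. d s \<ge> 1"
    and "\<forall>c\<in>{1..m}. lam c \<ge> 0"
  shows "(\<exists>v. P1_opt_value n m U d lam v) \<and>
         (\<forall>v. P1_opt_value n m U d lam v \<longleftrightarrow> P2_opt_value n m U d lam v) \<and>
         (\<forall>z. P2_optimal n m U d lam z \<longrightarrow>
              P1_optimal_alloc n m U d lam (\<lambda>s c. if z s c > 0 then 1 else 0))"
proof -
  obtain z where "P2_optimal n m U d lam z"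
    using P2_optimal_exists assms(1,3) by (meson less_imp_le)
  then have "P2_opt_value n m U d lam (total n m z)"
    unfolding P2_optimal_def P2_opt_value_def by blast
  then show ?thesis
    using P1_opt_value_iff_P2_opt_value P2_optimal_imp_P1_optimal_alloc
    unfolding support_alloc_def by blast
qed

end
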